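(* Let $n\geq2$, let $\xi^1,\dots,\xi^{n-1}\in\mathbb{Q}^3\setminus\{0\}$ and $\xi^n\in\mathbb{Q}^3$. Then there exist points $x^1,\dots,x^n\in\mathbb{R}^3$ such that: if $\xi^n\neq0$, then $\Pi(x^i+\mathbb{R}\xi^i)\cap\Pi(x^j+\mathbb{R}\xi^j)=\emptyset$ for all $i\neq j$ in $\{1,\dots,n\}$; and if $\xi^n=0$, then $\Pi(x^i+\mathbb{R}\xi^i)\cap\Pi(x^j+\mathbb{R}\xi^j)=\emptyset$ for all $i\neq j$ in $\{1,\dots,n-1\}$ and $0_{Y_3}\notin\Pi(x^i+\mathbb{R}\xi^i)$ for all $i\in\{1,\dots,n-1\}$.
   Context: $Y_3=\mathbb{R}^3/\mathbb{Z}^3$, $\Pi:\mathbb{R}^3\to Y_3$ is the canonical surjection, and $0_{Y_3}=\Pi(0)$. *)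

theory Defs
  imports "HOL-Analysis.Analysis"
begin

text \<open>The torus Y_3 = R^3/Z^3 is represented by its elements, the cosets
  x + Z^3. The canonical surjection Pi maps x to its coset.\<close>

definition Pi3 :: "real^3 \<Rightarrow> (real^3) set" where
  "Pi3 x = {y. \<forall>k. y $ k - x $ k \<in> \<int>}"

definition zeroY3 :: "(real^3) set" where
  "zeroY3 = Pi3 0"

definition rat_vec :: "real^3 \<Rightarrow> bool" where
  "rat_vec v \<longleftrightarrow> (\<forall>k. v $ k \<in> \<rat>)"

definition line3 :: "real^3 \<Rightarrow> real^3 \<Rightarrow> (real^3) set" where
  "line3 x \<xi> = {x + t *\<^sub>R \<xi> | t. True}"

end

theory Submission
  imports Defs
begin

text \<open>If w is a nonzero integer vector orthogonal to the rational directions a and b, then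
  z \<mapsto> w \<bullet> z maps each coset of Z^3 into a single coset of Z and each of the two lines to a
  single point; so the images of x + R a and y + R b in the torus are disjoint once
  w \<bullet> (y - x) is not an integer. Such a w is a cross product with cleared denominators.
  Take x_i = i v, where v avoids the finitely many (negligible) hyperplanes orthogonal to the
  chosen vectors w and is scaled so that all |w \<bullet> v| < 1/(n+1): each offset
  w \<bullet> (x_j - x_i) = (j - i) (w \<bullet> v) is then nonzero of modulus < 1. The condition on the
  zero of the torus is the case of the degenerate line x_0 = 0, \<xi>_0 = 0.\<close>

definition int_vec :: "real^'n \<Rightarrow> bool" where
  "int_vec v \<longleftrightarrow> (\<forall>k. v $ k \<in> \<int>)"

lemma mem_Pi3_iff: "y \<in> Pi3 x \<longleftrightarrow> int_vec (y - x)"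
  by (simp add: Pi3_def int_vec_def)

lemma inner_int_vec_Ints:
  assumes "int_vec w" "int_vec z"
  shows "w \<bullet> z \<in> \<int>"
  using assms unfolding int_vec_def inner_vec_def by (simp add: Ints_sum)

lemma rat_vec_cross3: "rat_vec a \<Longrightarrow> rat_vec b \<Longrightarrow> rat_vec (cross3 a b)"
  by (simp add: rat_vec_def cross3_def forall_3)

lemma rat_vec_axis: "rat_vec (axis k 1)"
  by (simp add: rat_vec_def axis_def)

lemma rat_vec_orthogonal_pair:
  assumes "rat_vec a" "rat_vec b"
  obtains w where "rat_vec w" "w \<noteq> 0" "w \<bullet> a = 0" "w \<bullet> b = 0"
proof (cases "cross3 a b = 0")
  case False
  then show ?thesis
    using that rat_vec_cross3[OF assms] by (simp add: dot_cross_self)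
next
  case True
  have "\<exists>u. rat_vec u \<and> u \<noteq> 0 \<and> (\<exists>s. a = s *\<^sub>R u) \<and> (\<exists>t. b = t *\<^sub>R u)"
  proof (cases "a = 0")
    case a0: True
    show ?thesis
    proof (cases "b = 0")
      case True
      then show ?thesis
        using a0 rat_vec_axis[of 1] by (auto simp: vec_eq_iff axis_def)
    next
      case False
      then show ?thesis
        using a0 assms(2) by (metis scaleR_one scaleR_zero_left)
    qed
  next
    case False
    then show ?thesis
      using True assms(1) unfolding cross_eq_0 collinear_lemma
      by (metis scaleR_one scaleR_zero_left)
  qed
  then obtain u s t where u: "rat_vec u" "u \<noteq> 0" and ab: "a = s *\<^sub>R u" "b = t *\<^sub>R u"
    by blast
  obtain k where "cross3 u (axis k 1) \<noteq> 0"
    using cross_basis_nonzero[OF u(2)] by blast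
  then show ?thesis
    using that[of "cross3 u (axis k 1)"] rat_vec_cross3[OF u(1) rat_vec_axis]
    by (simp add: ab inner_commute[of _ u] dot_cross_self)
qed

lemma clear_denominators:
  fixes w :: "real^'n"
  assumes "\<forall>k. w $ k \<in> \<rat>"
  obtains d :: nat where "d > 0" "int_vec (real d *\<^sub>R w)"
proof -
  have "\<forall>k. \<exists>d::nat. d > 0 \<and> real d * w $ k \<in> \<int>"
  proof
    fix k
    obtain a b where "b > 0" "w $ k = of_int a / of_int b"
      using assms Rats_cases' by metis
    then show "\<exists>d::nat. d > 0 \<and> real d * w $ k \<in> \<int>"
      by (intro exI[of _ "nat b"]) auto
  qed
  then obtain d where d: "\<And>k. d k > (0::nat)" "\<And>k. real (d k) * w $ k \<in> \<int>"
    by metis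
  have "real (prod d UNIV) * w $ k \<in> \<int>" for k
  proof -
    have "prod d UNIV = prod d (UNIV - {k}) * d k"
      by (simp add: prod.remove[of UNIV k d])
    then have "real (prod d UNIV) * w $ k = real (prod d (UNIV - {k})) * (real (d k) * w $ k)"
      by simp
    also have "\<dots> \<in> \<int>"
      by (intro Ints_mult Ints_of_nat d(2))
    finally show ?thesis .
  qed
  then show ?thesis
    using that[of "prod d UNIV"] d(1) by (simp add: int_vec_def prod_pos)
qed

lemma int_vec_orthogonal_pair:
  assumes "rat_vec a" "rat_vec b"
  obtains w where "int_vec w" "w \<noteq> 0" "w \<bullet> a = 0" "w \<bullet> b = 0"
proof -
  obtain w where w: "rat_vec w" "w \<noteq> 0" "w \<bullet> a = 0" "w \<bullet> b = 0"
    using rat_vec_orthogonal_pair[OF assms] .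
  obtain d :: nat where "d > 0" "int_vec (real d *\<^sub>R w)"
    using w(1) clear_denominators unfolding rat_vec_def by blast
  then show ?thesis
    using that[of "real d *\<^sub>R w"] w by simp
qed

lemma Pi3_line3_disjointI:
  assumes "int_vec w" "w \<bullet> a = 0" "w \<bullet> b = 0" "w \<bullet> (y - x) \<notin> \<int>"
  shows "Pi3 ` line3 x a \<inter> Pi3 ` line3 y b = {}"
proof (rule ccontr)
  assume "Pi3 ` line3 x a \<inter> Pi3 ` line3 y b \<noteq> {}"
  then obtain s t where "Pi3 (x + s *\<^sub>R a) = Pi3 (y + t *\<^sub>R b)"
    by (auto simp: line3_def)
  then have "int_vec ((y + t *\<^sub>R b) - (x + s *\<^sub>R a))"
    by (metis diff_self mem_Pi3_iff int_vec_def zero_index Ints_0)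
  then have "w \<bullet> ((y + t *\<^sub>R b) - (x + s *\<^sub>R a)) \<in> \<int>"
    by (rule inner_int_vec_Ints[OF assms(1)])
  then show False
    using assms(2-4) by (simp add: inner_diff_right inner_add_right)
qed

lemma zeroY3_in_Pi3_line3_0: "zeroY3 \<in> Pi3 ` line3 0 a"
  by (force simp: zeroY3_def line3_def)

lemma exists_not_orthogonal:
  fixes W :: "'a::euclidean_space set"
  assumes "finite W" "0 \<notin> W"
  obtains v where "\<And>w. w \<in> W \<Longrightarrow> w \<bullet> v \<noteq> 0"
proof -
  have "negligible (\<Union>w\<in>W. {v. w \<bullet> v = 0})"
    using assms by (auto intro!: negligible_hyperplane)
  then have "(\<Union>w\<in>W. {v. w \<bullet> v = 0}) \<noteq> UNIV"
    by auto
  then show ?thesis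
    using that by blast
qed

lemma exists_small_not_orthogonal:
  fixes W :: "'a::euclidean_space set"
  assumes "finite W" "0 \<notin> W" "c > 0"
  obtains v where "\<And>w. w \<in> W \<Longrightarrow> w \<bullet> v \<noteq> 0 \<and> \<bar>w \<bullet> v\<bar> < c"
proof -
  obtain v where v: "\<And>w. w \<in> W \<Longrightarrow> w \<bullet> v \<noteq> 0"
    using exists_not_orthogonal[OF assms(1,2)] by blast
  define B where "B = (\<Sum>w\<in>W. \<bar>w \<bullet> v\<bar>) + 1"
  have B: "\<bar>w \<bullet> v\<bar> < B" if "w \<in> W" for w
    using member_le_sum[OF that, of "\<lambda>w. \<bar>w \<bullet> v\<bar>"] assms(1) by (simp add: B_def)
  have "B > 0"
    using assms(1) by (simp add: B_def sum_nonneg add_nonneg_pos)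
  have "w \<bullet> ((c / B) *\<^sub>R v) \<noteq> 0 \<and> \<bar>w \<bullet> ((c / B) *\<^sub>R v)\<bar> < c" if "w \<in> W" for w
    using v[OF that] B[OF that] \<open>B > 0\<close> assms(3) by (simp add: abs_mult field_simps)
  then show ?thesis
    using that by blast
qed

lemma Pi3_line3_separable:
  fixes \<eta> :: "nat \<Rightarrow> real^3"
  assumes "\<forall>i\<le>n. rat_vec (\<eta> i)"
  obtains x where "x 0 = 0"
    and "\<And>i j. i \<le> n \<Longrightarrow> j \<le> n \<Longrightarrow> i \<noteq> j \<Longrightarrow>
           Pi3 ` line3 (x i) (\<eta> i) \<inter> Pi3 ` line3 (x j) (\<eta> j) = {}"
proof -
  have "\<forall>i j. \<exists>w. i \<le> n \<and> j \<le> n \<longrightarrow>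
      int_vec w \<and> w \<noteq> 0 \<and> w \<bullet> \<eta> i = 0 \<and> w \<bullet> \<eta> j = 0"
    using assms int_vec_orthogonal_pair by metis
  then obtain W where W: "\<And>i j. i \<le> n \<Longrightarrow> j \<le> n \<Longrightarrow>
      int_vec (W i j) \<and> W i j \<noteq> 0 \<and> W i j \<bullet> \<eta> i = 0 \<and> W i j \<bullet> \<eta> j = 0"
    by metis
  let ?Ws = "case_prod W ` ({..n} \<times> {..n})"
  have "finite ?Ws" "0 \<notin> ?Ws" "1 / (real n + 1) > 0"
    using W by auto
  then obtain v where v: "\<And>w. w \<in> ?Ws \<Longrightarrow> w \<bullet> v \<noteq> 0 \<and> \<bar>w \<bullet> v\<bar> < 1 / (real n + 1)"
    using exists_small_not_orthogonal by blast
  define x where "x i = real i *\<^sub>R v" for i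
  have "Pi3 ` line3 (x i) (\<eta> i) \<inter> Pi3 ` line3 (x j) (\<eta> j) = {}"
    if ij: "i \<le> n" "j \<le> n" "i \<noteq> j" for i j
  proof (rule Pi3_line3_disjointI)
    show "int_vec (W i j)" "W i j \<bullet> \<eta> i = 0" "W i j \<bullet> \<eta> j = 0"
      using W[OF ij(1,2)] by auto
    have Wv: "W i j \<bullet> v \<noteq> 0" "\<bar>W i j \<bullet> v\<bar> < 1 / (real n + 1)"
      using v[of "W i j"] ij by auto
    have offset: "W i j \<bullet> (x j - x i) = (real j - real i) * (W i j \<bullet> v)"
      by (simp add: x_def algebra_simps)
    have "\<bar>real j - real i\<bar> * \<bar>W i j \<bullet> v\<bar> \<le> real n * (1 / (real n + 1))"
      using ij Wv(2) by (intro mult_mono) auto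
    also have "\<dots> < 1"
      by (simp add: field_simps)
    finally have "\<bar>W i j \<bullet> (x j - x i)\<bar> < 1"
      by (simp add: offset abs_mult)
    moreover have "W i j \<bullet> (x j - x i) \<noteq> 0"
      using ij Wv(1) by (simp add: offset)
    ultimately show "W i j \<bullet> (x j - x i) \<notin> \<int>"
      using Ints_nonzero_abs_less1 by blast
  qed
  then show ?thesis
    using that[of x] by (simp add: x_def)
qed

theorem lemma4p1:
  fixes n :: nat and \<xi> :: "nat \<Rightarrow> real^3"
  assumes "n \<ge> 2"
    and "\<forall>i\<in>{1..n}. rat_vec (\<xi> i)"
    and "\<forall>i\<in>{1..n-1}. \<xi> i \<noteq> 0"
  shows "\<exists>x :: nat \<Rightarrow> real^3.
     (\<xi> n \<noteq> 0 \<longrightarrow>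
        (\<forall>i\<in>{1..n}. \<forall>j\<in>{1..n}. i \<noteq> j \<longrightarrow>
           Pi3 ` line3 (x i) (\<xi> i) \<inter> Pi3 ` line3 (x j) (\<xi> j) = {})) \<and>
     (\<xi> n = 0 \<longrightarrow>
        (\<forall>i\<in>{1..n-1}. \<forall>j\<in>{1..n-1}. i \<noteq> j \<longrightarrow>
           Pi3 ` line3 (x i) (\<xi> i) \<inter> Pi3 ` line3 (x j) (\<xi> j) = {}) \<and>
        (\<forall>i\<in>{1..n-1}. zeroY3 \<notin> Pi3 ` line3 (x i) (\<xi> i)))"
proof -
  define \<eta> where "\<eta> = \<xi>(0 := 0)"
  have "\<forall>i\<le>n. rat_vec (\<eta> i)"
    using assms(2) by (simp add: \<eta>_def rat_vec_def)
  then obtain x where x0: "x 0 = 0" and disjoint: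
    "\<And>i j. i \<le> n \<Longrightarrow> j \<le> n \<Longrightarrow> i \<noteq> j \<Longrightarrow>
       Pi3 ` line3 (x i) (\<eta> i) \<inter> Pi3 ` line3 (x j) (\<eta> j) = {}"
    using Pi3_line3_separable by blast
  have disjoint_\<xi>: "Pi3 ` line3 (x i) (\<xi> i) \<inter> Pi3 ` line3 (x j) (\<xi> j) = {}"
    if "i \<in> {1..n}" "j \<in> {1..n}" "i \<noteq> j" for i j
    using disjoint[of i j] that by (simp add: \<eta>_def)
  have zeroY3_notin: "zeroY3 \<notin> Pi3 ` line3 (x i) (\<xi> i)" if "i \<in> {1..n}" for i
    using disjoint[of i 0] zeroY3_in_Pi3_line3_0[of "\<eta> 0"] that x0 by (auto simp: \<eta>_def)
  moreover have "{1..n-1} \<subseteq> {1..n}"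
    by auto
  ultimately show ?thesis
    using disjoint_\<xi> by (intro exI[of _ x]) blast
qed

end
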